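(* Under the setting in the context, if $\langle\overline{\mathbf V}_{\boldsymbol\xi}\tilde{\mathbf u},\tilde{\mathbf u}\rangle=0$, then $n^{-1}\sum_{k=1}^nV_k^2\to\mathbb E(\langle\tilde{\mathbf u},\boldsymbol\varepsilon_1\rangle^2)$ almost surely as $n\to\infty$, and $\mathbb E(\langle\tilde{\mathbf u},\boldsymbol\varepsilon_1\rangle^2)=0$ holds if and only if $X_{k,1}=X_{k,2}$ almost surely for all $k\in\mathbb N$.
   Context: Setting: $\mathbf X_k=(X_{k,1},X_{k,2})^\top$, $\mathbf X_0=\mathbf 0$, and for $k\in\mathbb N$, $\mathbf X_k=\sum_{j=1}^{X_{k-1,1}}\boldsymbol\xi_{k,j,1}+\sum_{j=1}^{X_{k-1,2}}\boldsymbol\xi_{k,j,2}+\boldsymbol\varepsilon_k$, where $\{\boldsymbol\xi_{k,j,i},\boldsymbol\varepsilon_k:k,j\in\mathbb N,i\in\{1,2\}\}$ are independent $\mathbb Z_+^2$-valued random vectors and each of the families $\{\boldsymbol\xi_{k,j,1}\}$, $\{\boldsymbol\xi_{k,j,2}\}$, $\{\boldsymbol\varepsilon_k\}$ is identically distributed. $\mathbb E\boldsymbol\xi_{1,1,1}=(\alpha,\beta)^\top$, $\mathbb E\boldsymbol\xi_{1,1,2}=(\beta,\alpha)^\top$, with $(\alpha,\beta)\in(0,1)^2$, $\alpha+\beta=1$. Assume $\mathbb E\|\boldsymbol\xi_{1,1,1}\|^8,\mathbb E\|\boldsymbol\xi_{1,1,2}\|^8,\mathbb E\|\boldsymbol\varepsilon_1\|^8<\infty$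 and $\mathbb E\boldsymbol\varepsilon_1\neq\mathbf 0$. $\mathbf V_{\boldsymbol\xi_i}=\operatorname{Var}(\boldsymbol\xi_{1,1,i})$, $\overline{\mathbf V}_{\boldsymbol\xi}=\frac12(\mathbf V_{\boldsymbol\xi_1}+\mathbf V_{\boldsymbol\xi_2})$, $\tilde{\mathbf u}=(1,-1)^\top$, $V_k=X_{k,1}-X_{k,2}$. *)

theory Defs
  imports "HOL-Probability.Probability"
begin

definition vec2 :: "nat \<times> nat \<Rightarrow> real ^ 2" where
  "vec2 p = vector [real (fst p), real (snd p)]"

definition utilde :: "real ^ 2" where
  "utilde = vector [1, -1]"

definition cov_matrix :: "'a measure \<Rightarrow> ('a \<Rightarrow> real ^ 2) \<Rightarrow> real ^ 2 ^ 2" where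
  "cov_matrix M Z = (\<chi> i j. integral\<^sup>L M (\<lambda>\<omega>.
      (Z \<omega> $ i - integral\<^sup>L M (\<lambda>\<omega>'. Z \<omega>' $ i)) * (Z \<omega> $ j - integral\<^sup>L M (\<lambda>\<omega>'. Z \<omega>' $ j))))"

text \<open>The two-type branching process with immigration:
  \<open>X_0 = 0\<close>, \<open>X_k = \<Sum>_{j=1}^{X_{k-1,1}} \<xi>_{k,j,1} + \<Sum>_{j=1}^{X_{k-1,2}} \<xi>_{k,j,2} + \<epsilon>_k\<close>.
  \<open>\<xi>1 k j\<close> is \<open>\<xi>_{k,j,1}\<close>, \<open>\<xi>2 k j\<close> is \<open>\<xi>_{k,j,2}\<close>.\<close>
fun gwi :: "(nat \<Rightarrow> nat \<Rightarrow> 'a \<Rightarrow> nat \<times> nat) \<Rightarrow> (nat \<Rightarrow> nat \<Rightarrow> 'a \<Rightarrow> nat \<times> nat)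
             \<Rightarrow> (nat \<Rightarrow> 'a \<Rightarrow> nat \<times> nat) \<Rightarrow> nat \<Rightarrow> 'a \<Rightarrow> nat \<times> nat" where
  "gwi \<xi>1 \<xi>2 \<epsilon> 0 \<omega> = (0, 0)"
| "gwi \<xi>1 \<xi>2 \<epsilon> (Suc k) \<omega> =
     (let s = gwi \<xi>1 \<xi>2 \<epsilon> k \<omega> in
       ((\<Sum>j\<in>{1..fst s}. fst (\<xi>1 (Suc k) j \<omega>)) + (\<Sum>j\<in>{1..snd s}. fst (\<xi>2 (Suc k) j \<omega>))
          + fst (\<epsilon> (Suc k) \<omega>),
        (\<Sum>j\<in>{1..fst s}. snd (\<xi>1 (Suc k) j \<omega>)) + (\<Sum>j\<in>{1..snd s}. snd (\<xi>2 (Suc k) j \<omega>))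
          + snd (\<epsilon> (Suc k) \<omega>)))"

text \<open>Index set of the whole family of offspring and immigration vectors:
  \<open>Inl (k,j,i)\<close> stands for \<open>\<xi>_{k,j,i}\<close> (\<open>k,j \<ge> 1\<close>, \<open>i \<in> {1,2}\<close>), \<open>Inr k\<close> for \<open>\<epsilon>_k\<close> (\<open>k \<ge> 1\<close>).\<close>
definition gwi_index :: "((nat \<times> nat \<times> nat) + nat) set" where
  "gwi_index = {Inl (k, j, i) | k j i. k \<ge> 1 \<and> j \<ge> 1 \<and> i \<in> {1, 2}} \<union> {Inr k | k. k \<ge> 1}"

definition gwi_family ::
  "(nat \<Rightarrow> nat \<Rightarrow> 'a \<Rightarrow> nat \<times> nat) \<Rightarrow> (nat \<Rightarrow> nat \<Rightarrow> 'a \<Rightarrow> nat \<times> nat)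
    \<Rightarrow> (nat \<Rightarrow> 'a \<Rightarrow> nat \<times> nat) \<Rightarrow> ((nat \<times> nat \<times> nat) + nat) \<Rightarrow> 'a \<Rightarrow> nat \<times> nat" where
  "gwi_family \<xi>1 \<xi>2 \<epsilon> x = (case x of
      Inl (k, j, i) \<Rightarrow> (if i = 1 then \<xi>1 k j else \<xi>2 k j)
    | Inr k \<Rightarrow> \<epsilon> k)"

end

theory Submission
  imports Defs
begin

(*
  The two quadratic forms in the critical condition are the variances of <u, xi_1> and <u, xi_2>
  for u = (1, -1), so both vanish and each <u, xi_i> is almost surely equal to its mean, which is
  +-(alpha - beta). An integer of modulus less than 1 is 0, so all offspring vectors have equal
  coordinates almost surely, and then V_k = <u, eps_k> for every k. Hence n^-1 * sum V_k^2 is the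
  empirical mean of the i.i.d. variables <u, eps_k>^2; the eighth moment of eps gives them a fourth
  moment, which is enough for the elementary fourth-moment proof of the strong law of large numbers.
  Finally E <u, eps_1>^2 = 0 iff eps_1, hence every eps_k and every X_k, has equal coordinates a.s.
*)

lemma abs_power_le_one_plus_even_power:
  fixes x :: real
  assumes "j \<le> n" "even n"
  shows "\<bar>x ^ j\<bar> \<le> 1 + x ^ n"
proof (cases "\<bar>x\<bar> \<le> 1")
  case True
  then have "\<bar>x ^ j\<bar> \<le> 1" by (simp add: power_le_one power_abs)
  moreover have "0 \<le> x ^ n" using \<open>even n\<close> by (simp add: zero_le_even_power)
  ultimately show ?thesis by linarith
next
  case False
  then have "\<bar>x\<bar> ^ j \<le> \<bar>x\<bar> ^ n" using \<open>j \<le> n\<close> by (intro power_increasing) auto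
  also have "\<bar>x\<bar> ^ n = x ^ n" using \<open>even n\<close> by (simp add: power_even_abs)
  finally show ?thesis by (simp add: power_abs)
qed

lemma power4_add_le: "((a::real) + b) ^ 4 \<le> 8 * (a ^ 4 + b ^ 4)"
proof -
  have "(a + b)\<^sup>2 \<le> 2 * (a\<^sup>2 + b\<^sup>2)"
    using zero_le_square[of "a - b"] by (simp add: power2_eq_square algebra_simps)
  then have "((a + b)\<^sup>2)\<^sup>2 \<le> (2 * (a\<^sup>2 + b\<^sup>2))\<^sup>2"
    by (intro power_mono) auto
  also have "\<dots> \<le> 8 * (a ^ 4 + b ^ 4)"
    using zero_le_square[of "a\<^sup>2 - b\<^sup>2"] by (simp add: power2_eq_square power4_eq_xxxx algebra_simps)
  finally show ?thesis by (simp add: power4_eq_xxxx power2_eq_square)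
qed

lemma (in finite_measure) integrable_power_le_even:
  fixes f :: "'a \<Rightarrow> real"
  assumes [measurable]: "f \<in> borel_measurable M" and "integrable M (\<lambda>x. f x ^ n)"
    and "j \<le> n" "even n"
  shows "integrable M (\<lambda>x. f x ^ j)"
proof (rule Bochner_Integration.integrable_bound)
  show "integrable M (\<lambda>x. 1 + f x ^ n)" using assms(2) by simp
  show "AE x in M. norm (f x ^ j) \<le> norm (1 + f x ^ n)"
    using abs_power_le_one_plus_even_power[OF assms(3,4)] \<open>even n\<close>
    by (auto simp: zero_le_even_power)
qed measurable

lemma integrable_fourth_power_add:
  fixes f g :: "'a \<Rightarrow> real"
  assumes [measurable]: "f \<in> borel_measurable M" "g \<in> borel_measurable M"
    and "integrable M (\<lambda>x. f x ^ 4)" "integrable M (\<lambda>x. g x ^ 4)"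
  shows "integrable M (\<lambda>x. (f x + g x) ^ 4)"
proof (rule Bochner_Integration.integrable_bound)
  show "integrable M (\<lambda>x. 8 * (f x ^ 4 + g x ^ 4))" using assms(3,4) by simp
  show "AE x in M. norm ((f x + g x) ^ 4) \<le> norm (8 * (f x ^ 4 + g x ^ 4))"
    using power4_add_le by (auto simp: zero_le_even_power)
qed measurable

lemma integrable_mult_of_square_integrable:
  fixes f g :: "'a \<Rightarrow> real"
  assumes [measurable]: "f \<in> borel_measurable M" "g \<in> borel_measurable M"
    and "integrable M (\<lambda>x. (f x)\<^sup>2)" "integrable M (\<lambda>x. (g x)\<^sup>2)"
  shows "integrable M (\<lambda>x. f x * g x)"
proof (rule Bochner_Integration.integrable_bound)
  show "integrable M (\<lambda>x. (f x)\<^sup>2 + (g x)\<^sup>2)" using assms(3,4) by simp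
  have "\<bar>f x * g x\<bar> \<le> (f x)\<^sup>2 + (g x)\<^sup>2" for x
  proof -
    have "2 * \<bar>f x * g x\<bar> \<le> (f x)\<^sup>2 + (g x)\<^sup>2"
      using zero_le_square[of "\<bar>f x\<bar> - \<bar>g x\<bar>"] by (simp add: power2_eq_square algebra_simps abs_mult)
    then show ?thesis by simp
  qed
  then show "AE x in M. norm (f x * g x) \<le> norm ((f x)\<^sup>2 + (g x)\<^sup>2)" by simp
qed measurable

lemma (in finite_measure) integrable_square_diff_const:
  fixes f :: "'a \<Rightarrow> real"
  assumes "integrable M (\<lambda>\<omega>. (f \<omega>)\<^sup>2)" "integrable M f"
  shows "integrable M (\<lambda>\<omega>. (f \<omega> - c)\<^sup>2)"
proof -
  have "(\<lambda>\<omega>. (f \<omega> - c)\<^sup>2) = (\<lambda>\<omega>. (f \<omega>)\<^sup>2 + ((- 2 * c) * f \<omega> + c\<^sup>2))"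
    by (auto simp: power2_eq_square algebra_simps)
  then show ?thesis using assms by simp
qed

lemma distr_comp_eq_of_distr_eq:
  assumes "distr M N X = distr M N Y" "X \<in> measurable M N" "Y \<in> measurable M N" "g \<in> measurable N K"
  shows "distr M K (\<lambda>\<omega>. g (X \<omega>)) = distr M K (\<lambda>\<omega>. g (Y \<omega>))"
  using assms distr_distr[of g N K X M] distr_distr[of g N K Y M] by (simp add: comp_def)

lemma AE_eq_of_distr_eq:
  assumes "distr M (count_space UNIV) X = distr M (count_space UNIV) Y"
    and "X \<in> measurable M (count_space UNIV)" "Y \<in> measurable M (count_space UNIV)"
    and "AE \<omega> in M. P (Y \<omega>)"
  shows "AE \<omega> in M. P (X \<omega>)"
proof -
  have "AE x in distr M (count_space UNIV) Y. P x" using assms(3,4) by (simp add: AE_distr_iff)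
  then have "AE x in distr M (count_space UNIV) X. P x" by (simp only: assms(1))
  then show ?thesis using assms(2) by (simp add: AE_distr_iff)
qed

lemma AE_tendsto_zero_of_summable_integral:
  fixes f :: "nat \<Rightarrow> 'a \<Rightarrow> real"
  assumes [measurable]: "\<And>n. f n \<in> borel_measurable M"
    and nonneg: "\<And>n x. 0 \<le> f n x" and int: "\<And>n. integrable M (f n)"
    and summable: "summable (\<lambda>n. integral\<^sup>L M (f n))"
  shows "AE x in M. (\<lambda>n. f n x) \<longlonglongrightarrow> 0"
proof -
  have "(\<integral>\<^sup>+ x. (\<Sum>n. ennreal (f n x)) \<partial>M) = (\<Sum>n. \<integral>\<^sup>+ x. ennreal (f n x) \<partial>M)"
    by (rule nn_integral_suminf) measurable
  also have "\<dots> = ennreal (\<Sum>n. integral\<^sup>L M (f n))"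
    using int nonneg summable
    by (simp add: nn_integral_eq_integral integral_nonneg_AE suminf_ennreal2)
  finally have "(\<integral>\<^sup>+ x. (\<Sum>n. ennreal (f n x)) \<partial>M) \<noteq> \<infinity>" by simp
  then have "AE x in M. (\<Sum>n. ennreal (f n x)) \<noteq> \<infinity>"
    by (intro nn_integral_PInf_AE) measurable
  then show ?thesis
  proof eventually_elim
    case (elim x)
    then have "summable (\<lambda>n. f n x)" using nonneg by (intro summable_suminf_not_top) auto
    then show ?case by (rule summable_LIMSEQ_zero)
  qed
qed

lemma measurable_comp_count_space:
  "X \<in> measurable M (count_space UNIV) \<Longrightarrow> (\<lambda>\<omega>. h (X \<omega>)) \<in> borel_measurable M"
  by (rule measurable_compose[where N = "count_space UNIV"]) auto

lemma (in prob_space) indep_sets_reindex: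
  assumes ind: "indep_sets F I" and inj: "inj_on f J" and sub: "f ` J \<subseteq> I"
  shows "indep_sets (\<lambda>j. F (f j)) J"
  unfolding indep_sets_def
proof (intro conjI ballI allI impI)
  fix j assume "j \<in> J" then show "F (f j) \<subseteq> events" using ind sub by (auto simp: indep_sets_def)
next
  fix K A assume K: "K \<subseteq> J" "K \<noteq> {}" "finite K" and A: "A \<in> (\<Pi> j\<in>K. F (f j))"
  have injK: "inj_on f K" using inj K(1) by (rule inj_on_subset)
  define B where "B i = A (the_inv_into K f i)" for i
  have Bf: "B (f j) = A j" if "j \<in> K" for j using that injK by (simp add: B_def the_inv_into_f_f)
  have "B \<in> (\<Pi> i\<in>f ` K. F i)" using A Bf by auto
  moreover have "f ` K \<subseteq> I" "f ` K \<noteq> {}" "finite (f ` K)" using K sub by auto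
  ultimately have "prob (\<Inter>i\<in>f ` K. B i) = (\<Prod>i\<in>f ` K. prob (B i))"
    using ind unfolding indep_sets_def by blast
  moreover have "(\<Inter>i\<in>f ` K. B i) = (\<Inter>j\<in>K. A j)" using Bf by auto
  moreover have "(\<Prod>i\<in>f ` K. prob (B i)) = (\<Prod>j\<in>K. prob (A j))"
    using Bf injK by (simp add: prod.reindex)
  ultimately show "prob (\<Inter>j\<in>K. A j) = (\<Prod>j\<in>K. prob (A j))" by simp
qed

lemma (in prob_space) indep_vars_reindex:
  assumes "indep_vars M' X I" and "inj_on f J" and "f ` J \<subseteq> I"
  shows "indep_vars (\<lambda>j. M' (f j)) (\<lambda>j. X (f j)) J"
  using assms indep_sets_reindex[OF _ assms(2,3), of "\<lambda>i. {X i -` A \<inter> space M |A. A \<in> sets (M' i)}"]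
  unfolding indep_vars_def2 by auto

locale iid_fourth_moment = prob_space +
  fixes Z :: "nat \<Rightarrow> 'a \<Rightarrow> real"
  assumes indep: "indep_vars (\<lambda>_. borel) Z UNIV"
    and identically_distributed: "\<And>k. distr M borel (Z k) = distr M borel (Z 0)"
    and integrable_fourth: "integrable M (\<lambda>\<omega>. Z 0 \<omega> ^ 4)"
begin

lemma measurable_Z [measurable]: "Z k \<in> borel_measurable M"
  using indep by (auto simp: indep_vars_def)

lemma distr_comp_Z:
  "g \<in> borel_measurable borel \<Longrightarrow> distr M borel (\<lambda>\<omega>. g (Z k \<omega>)) = distr M borel (\<lambda>\<omega>. g (Z 0 \<omega>))"
  by (rule distr_comp_eq_of_distr_eq[OF identically_distributed]) auto

lemma integrable_comp_Z_iff:
  fixes g :: "real \<Rightarrow> real"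
  assumes [measurable]: "g \<in> borel_measurable borel"
  shows "integrable M (\<lambda>\<omega>. g (Z k \<omega>)) \<longleftrightarrow> integrable M (\<lambda>\<omega>. g (Z 0 \<omega>))"
  using integrable_distr_eq[of "Z k" M borel g] integrable_distr_eq[of "Z 0" M borel g]
  by (simp add: identically_distributed[of k])

lemma expectation_comp_Z:
  fixes g :: "real \<Rightarrow> real"
  assumes [measurable]: "g \<in> borel_measurable borel"
  shows "expectation (\<lambda>\<omega>. g (Z k \<omega>)) = expectation (\<lambda>\<omega>. g (Z 0 \<omega>))"
  using integral_distr[of "Z k" M borel g] integral_distr[of "Z 0" M borel g]
  by (simp add: identically_distributed[of k])

lemma integrable_power_Z:
  assumes "j \<le> 4"
  shows "integrable M (\<lambda>\<omega>. Z k \<omega> ^ j)"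
proof (rule integrable_power_le_even[OF measurable_Z _ assms])
  show "integrable M (\<lambda>\<omega>. Z k \<omega> ^ 4)"
    using integrable_fourth integrable_comp_Z_iff[of "\<lambda>x. x ^ 4" k] by simp
qed simp

definition partial_sum :: "nat \<Rightarrow> 'a \<Rightarrow> real" where
  "partial_sum n \<omega> = (\<Sum>k<n. Z k \<omega>)"

lemma measurable_partial_sum [measurable]: "partial_sum n \<in> borel_measurable M"
  unfolding partial_sum_def by measurable

lemma partial_sum_0 [simp]: "partial_sum 0 \<omega> = 0"
  and partial_sum_Suc: "partial_sum (Suc n) \<omega> = partial_sum n \<omega> + Z n \<omega>"
  by (simp_all add: partial_sum_def)

lemma integrable_power_partial_sum: "j \<le> 4 \<Longrightarrow> integrable M (\<lambda>\<omega>. partial_sum n \<omega> ^ j)"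
proof -
  have "integrable M (\<lambda>\<omega>. partial_sum n \<omega> ^ 4)"
  proof (induction n)
    case (Suc n)
    then show ?case
      using integrable_fourth_power_add[OF _ _ Suc integrable_power_Z[of 4 n]]
      by (simp add: partial_sum_Suc)
  qed simp
  then show "j \<le> 4 \<Longrightarrow> ?thesis" by (rule integrable_power_le_even[OF measurable_partial_sum]) auto
qed

lemma
  assumes "a \<le> 4" "b \<le> 4"
  shows integrable_mixed_moment: "integrable M (\<lambda>\<omega>. Z n \<omega> ^ a * partial_sum n \<omega> ^ b)"
    and expectation_mixed_moment: "expectation (\<lambda>\<omega>. Z n \<omega> ^ a * partial_sum n \<omega> ^ b)
           = expectation (\<lambda>\<omega>. Z n \<omega> ^ a) * expectation (\<lambda>\<omega>. partial_sum n \<omega> ^ b)"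
proof -
  have "indep_var borel (Z n) borel (partial_sum n)"
    using indep_vars_sum[of "{..<n}" n Z] indep_vars_subset[OF indep]
    by (simp add: partial_sum_def[abs_def])
  then have ind: "indep_var borel ((\<lambda>x. x ^ a) \<circ> Z n) borel ((\<lambda>x. x ^ b) \<circ> partial_sum n)"
    by (rule indep_var_compose) auto
  show "integrable M (\<lambda>\<omega>. Z n \<omega> ^ a * partial_sum n \<omega> ^ b)"
    using indep_var_integrable[OF ind] integrable_power_Z integrable_power_partial_sum assms
    by (simp add: o_def)
  show "expectation (\<lambda>\<omega>. Z n \<omega> ^ a * partial_sum n \<omega> ^ b)
           = expectation (\<lambda>\<omega>. Z n \<omega> ^ a) * expectation (\<lambda>\<omega>. partial_sum n \<omega> ^ b)"
    using indep_var_lebesgue_integral[OF ind] integrable_power_Z integrable_power_partial_sum assms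
    by (simp add: o_def)
qed

lemma expectation_power_Z: "expectation (\<lambda>\<omega>. Z k \<omega> ^ j) = expectation (\<lambda>\<omega>. Z 0 \<omega> ^ j)"
  by (rule expectation_comp_Z) simp

context
  assumes centered: "expectation (Z 0) = 0"
begin

lemma expectation_Z: "expectation (Z k) = 0"
  using expectation_power_Z[of k 1] centered by simp

lemma expectation_partial_sum: "expectation (partial_sum n) = 0"
  using integrable_power_Z[of 1] expectation_Z
  by (simp add: partial_sum_def[abs_def] Bochner_Integration.integral_sum)

lemma expectation_partial_sum_square:
  "expectation (\<lambda>\<omega>. partial_sum n \<omega> ^ 2) = real n * expectation (\<lambda>\<omega>. Z 0 \<omega> ^ 2)"
proof (induction n)
  case (Suc n)
  have "(\<lambda>\<omega>. partial_sum (Suc n) \<omega> ^ 2)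
      = (\<lambda>\<omega>. partial_sum n \<omega> ^ 2 + (2 * (Z n \<omega> ^ 1 * partial_sum n \<omega> ^ 1) + Z n \<omega> ^ 2))"
    by (auto simp: partial_sum_Suc power2_eq_square algebra_simps)
  then have "expectation (\<lambda>\<omega>. partial_sum (Suc n) \<omega> ^ 2)
      = expectation (\<lambda>\<omega>. partial_sum n \<omega> ^ 2)
        + (2 * (expectation (Z n) * expectation (partial_sum n)) + expectation (\<lambda>\<omega>. Z n \<omega> ^ 2))"
    using integrable_power_partial_sum[of 2 n] integrable_power_Z[of 2 n]
      integrable_mixed_moment[of 1 1 n] expectation_mixed_moment[of 1 1 n]
    by simp
  then show ?case
    using Suc expectation_Z[of n] expectation_power_Z[of n 2] by (simp add: algebra_simps)
qed simp

lemma expectation_partial_sum_fourth_le: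
  defines "C \<equiv> 3 * (expectation (\<lambda>\<omega>. Z 0 \<omega> ^ 2))\<^sup>2 + expectation (\<lambda>\<omega>. Z 0 \<omega> ^ 4)"
  shows "expectation (\<lambda>\<omega>. partial_sum n \<omega> ^ 4) \<le> C * (real n)\<^sup>2"
proof (induction n)
  case (Suc n)
  have "(\<lambda>\<omega>. partial_sum (Suc n) \<omega> ^ 4) = (\<lambda>\<omega>. partial_sum n \<omega> ^ 4
      + (4 * (Z n \<omega> ^ 1 * partial_sum n \<omega> ^ 3) + (6 * (Z n \<omega> ^ 2 * partial_sum n \<omega> ^ 2)
      + (4 * (Z n \<omega> ^ 3 * partial_sum n \<omega> ^ 1) + Z n \<omega> ^ 4))))"
    by (auto simp: partial_sum_Suc power4_eq_xxxx power3_eq_cube power2_eq_square algebra_simps)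
  \<comment> \<open>The terms with an odd power of \<open>Z n\<close> vanish by independence and centring.\<close>
  then have "expectation (\<lambda>\<omega>. partial_sum (Suc n) \<omega> ^ 4)
      = expectation (\<lambda>\<omega>. partial_sum n \<omega> ^ 4)
        + 6 * (expectation (\<lambda>\<omega>. Z n \<omega> ^ 2) * expectation (\<lambda>\<omega>. partial_sum n \<omega> ^ 2))
        + expectation (\<lambda>\<omega>. Z n \<omega> ^ 4)"
    using integrable_power_partial_sum[of 4 n] integrable_power_Z[of 4 n]
      integrable_mixed_moment[of 1 3 n] integrable_mixed_moment[of 2 2 n] integrable_mixed_moment[of 3 1 n]
      expectation_mixed_moment[of 1 3 n] expectation_mixed_moment[of 2 2 n] expectation_mixed_moment[of 3 1 n]
      expectation_Z[of n] expectation_partial_sum[of n]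
    by simp
  also have "\<dots> = expectation (\<lambda>\<omega>. partial_sum n \<omega> ^ 4)
        + 6 * real n * (expectation (\<lambda>\<omega>. Z 0 \<omega> ^ 2))\<^sup>2 + expectation (\<lambda>\<omega>. Z 0 \<omega> ^ 4)"
    using expectation_partial_sum_square[of n] expectation_power_Z[of n 2] expectation_power_Z[of n 4]
    by (simp add: power2_eq_square)
  also have "\<dots> \<le> C * (real n)\<^sup>2
        + 6 * real n * (expectation (\<lambda>\<omega>. Z 0 \<omega> ^ 2))\<^sup>2 + expectation (\<lambda>\<omega>. Z 0 \<omega> ^ 4)"
    using Suc by simp
  also have "\<dots> \<le> C * (real (Suc n))\<^sup>2"
  proof -
    have "0 \<le> expectation (\<lambda>\<omega>. Z 0 \<omega> ^ 4)" by (simp add: zero_le_even_power)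
    then have "0 \<le> real n * expectation (\<lambda>\<omega>. Z 0 \<omega> ^ 4)" by simp
    then show ?thesis by (simp add: C_def power2_eq_square algebra_simps)
  qed
  finally show ?case .
qed simp

lemma summable_expectation_average_fourth:
  "summable (\<lambda>n. expectation (\<lambda>\<omega>. (partial_sum (Suc n) \<omega> / real (Suc n)) ^ 4))"
proof (rule summable_comparison_test')
  define C where "C = 3 * (expectation (\<lambda>\<omega>. Z 0 \<omega> ^ 2))\<^sup>2 + expectation (\<lambda>\<omega>. Z 0 \<omega> ^ 4)"
  have "summable (\<lambda>n. inverse (real n ^ 2))"
    by (rule inverse_power_summable) simp
  then have "summable (\<lambda>n. inverse (real (Suc n) ^ 2))"
    by (subst summable_Suc_iff)
  then show "summable (\<lambda>n. C / (real (Suc n))\<^sup>2)"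
    unfolding divide_inverse by (rule summable_mult)
  fix n
  have "expectation (\<lambda>\<omega>. (partial_sum (Suc n) \<omega> / real (Suc n)) ^ 4)
      = expectation (\<lambda>\<omega>. partial_sum (Suc n) \<omega> ^ 4) / real (Suc n) ^ 4"
    unfolding power_divide by simp
  also have "\<dots> \<le> C * (real (Suc n))\<^sup>2 / real (Suc n) ^ 4"
    unfolding C_def by (intro divide_right_mono expectation_partial_sum_fourth_le) simp
  also have "\<dots> = C / (real (Suc n))\<^sup>2"
  proof -
    have "real (Suc n) ^ 4 = (real (Suc n))\<^sup>2 * (real (Suc n))\<^sup>2"
      by (simp flip: power_add)
    moreover have cancel: "\<And>a::real. a \<noteq> 0 \<Longrightarrow> C * a / (a * a) = C / a" by simp
    ultimately show ?thesis using cancel[of "(real (Suc n))\<^sup>2"] by (simp del: of_nat_Suc)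
  qed
  finally show "norm (expectation (\<lambda>\<omega>. (partial_sum (Suc n) \<omega> / real (Suc n)) ^ 4))
      \<le> C / (real (Suc n))\<^sup>2"
    by (simp add: zero_le_even_power)
qed

lemma AE_partial_sum_average_tendsto_zero:
  "AE \<omega> in M. (\<lambda>n. partial_sum n \<omega> / real n) \<longlonglongrightarrow> 0"
proof -
  define f where "f n = (\<lambda>\<omega>. (partial_sum (Suc n) \<omega> / real (Suc n)) ^ 4)" for n
  have f_nonneg: "0 \<le> f n \<omega>" for n \<omega>
    unfolding f_def by (rule zero_le_even_power) simp
  have f_integrable: "integrable M (f n)" for n
    unfolding f_def power_divide using integrable_power_partial_sum[of 4 "Suc n"] by simp
  have f_measurable: "f n \<in> borel_measurable M" for n
    unfolding f_def by measurable
  have f_summable: "summable (\<lambda>n. expectation (f n))"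
    using summable_expectation_average_fourth by (simp add: f_def)
  have "AE \<omega> in M. (\<lambda>n. f n \<omega>) \<longlonglongrightarrow> 0"
    by (rule AE_tendsto_zero_of_summable_integral[OF f_measurable f_nonneg f_integrable f_summable])
  then show ?thesis
  proof eventually_elim
    case (elim \<omega>)
    then have "(\<lambda>n. root 4 (f n \<omega>)) \<longlonglongrightarrow> root 4 0"
      by (intro tendsto_real_root)
    then have "(\<lambda>n. \<bar>root 4 (f n \<omega>)\<bar>) \<longlonglongrightarrow> 0"
      by (intro tendsto_rabs_zero) simp
    moreover have "\<bar>root 4 (f n \<omega>)\<bar> = \<bar>partial_sum (Suc n) \<omega> / real (Suc n)\<bar>" for n
      unfolding f_def by (rule root_abs_power) simp
    ultimately have "(\<lambda>n. \<bar>partial_sum (Suc n) \<omega> / real (Suc n)\<bar>) \<longlonglongrightarrow> 0"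
      by simp
    then have "(\<lambda>n. partial_sum (Suc n) \<omega> / real (Suc n)) \<longlonglongrightarrow> 0"
      by (simp only: tendsto_rabs_zero_iff)
    then show ?case by (rule LIMSEQ_imp_Suc)
  qed
qed

end

theorem AE_average_tendsto_expectation:
  "AE \<omega> in M. (\<lambda>n. (\<Sum>k<n. Z k \<omega>) / real n) \<longlonglongrightarrow> expectation (Z 0)"
proof -
  define \<mu> where "\<mu> = expectation (Z 0)"
  have integrable_Z0: "integrable M (Z 0)" using integrable_power_Z[of 1 0] by simp
  interpret centered: iid_fourth_moment M "\<lambda>k \<omega>. Z k \<omega> - \<mu>"
  proof
    show "indep_vars (\<lambda>_. borel) (\<lambda>k \<omega>. Z k \<omega> - \<mu>) UNIV"
      using indep_vars_compose2[OF indep, of "\<lambda>_ x. x - \<mu>" "\<lambda>_. borel"] by simp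
    show "distr M borel (\<lambda>\<omega>. Z k \<omega> - \<mu>) = distr M borel (\<lambda>\<omega>. Z 0 \<omega> - \<mu>)" for k
      by (rule distr_comp_Z) simp
    show "integrable M (\<lambda>\<omega>. (Z 0 \<omega> - \<mu>) ^ 4)"
      using integrable_fourth_power_add[of "Z 0" M "\<lambda>_. - \<mu>"] integrable_fourth by simp
  qed
  have "expectation (\<lambda>\<omega>. Z 0 \<omega> - \<mu>) = 0"
    using integrable_Z0 by (simp add: \<mu>_def prob_space)
  then have "AE \<omega> in M. (\<lambda>n. centered.partial_sum n \<omega> / real n) \<longlonglongrightarrow> 0"
    by (rule centered.AE_partial_sum_average_tendsto_zero)
  then show ?thesis
  proof eventually_elim
    case (elim \<omega>)
    have "centered.partial_sum n \<omega> / real n + \<mu> = (\<Sum>k<n. Z k \<omega>) / real n" if "n \<ge> 1" for n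
      using that by (simp add: centered.partial_sum_def sum_subtractf field_simps)
    then have "\<forall>\<^sub>F n in sequentially. centered.partial_sum n \<omega> / real n + \<mu> = (\<Sum>k<n. Z k \<omega>) / real n"
      by (auto simp: eventually_sequentially)
    moreover have "(\<lambda>n. centered.partial_sum n \<omega> / real n + \<mu>) \<longlonglongrightarrow> \<mu>"
      using tendsto_add[OF elim tendsto_const[of \<mu>]] by simp
    ultimately show ?case unfolding \<mu>_def by (rule Lim_transform_eventually[rotated])
  qed
qed

end

lemma vec2_nth [simp]: "vec2 p $ 1 = real (fst p)" "vec2 p $ 2 = real (snd p)"
  by (simp_all add: vec2_def)

lemma inner_utilde_vec2: "utilde \<bullet> vec2 p = real (fst p) - real (snd p)"
  by (simp add: utilde_def inner_vec_def sum_2)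

lemma norm_vec2_square: "(norm (vec2 p))\<^sup>2 = (real (fst p))\<^sup>2 + (real (snd p))\<^sup>2"
  unfolding power2_norm_eq_inner by (simp add: inner_vec_def sum_2 power2_eq_square)

lemma integrable_square_vec2_component:
  assumes X: "X \<in> measurable M (count_space UNIV)"
    and square_integrable: "integrable M (\<lambda>\<omega>. (norm (vec2 (X \<omega>)))\<^sup>2)"
  shows "integrable M (\<lambda>\<omega>. (vec2 (X \<omega>) $ i)\<^sup>2)"
proof (rule Bochner_Integration.integrable_bound[OF square_integrable])
  show "(\<lambda>\<omega>. (vec2 (X \<omega>) $ i)\<^sup>2) \<in> borel_measurable M"
    using measurable_comp_count_space[OF X, of "\<lambda>p. (vec2 p $ i)\<^sup>2"] by simp
  have "(vec2 p $ i)\<^sup>2 \<le> (norm (vec2 p))\<^sup>2" for p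
    by (metis abs_le_square_iff abs_norm_cancel component_le_norm_cart)
  then show "AE \<omega> in M. norm ((vec2 (X \<omega>) $ i)\<^sup>2) \<le> norm ((norm (vec2 (X \<omega>)))\<^sup>2)"
    by simp
qed

lemma (in prob_space) cov_matrix_vec2_quadratic_form:
  fixes X :: "'a \<Rightarrow> nat \<times> nat"
  assumes X: "X \<in> measurable M (count_space UNIV)"
    and square_integrable: "integrable M (\<lambda>\<omega>. (norm (vec2 (X \<omega>)))\<^sup>2)"
  shows "(cov_matrix M (\<lambda>\<omega>. vec2 (X \<omega>)) *v u) \<bullet> u = variance (\<lambda>\<omega>. u \<bullet> vec2 (X \<omega>))"
proof -
  define m where "m i = expectation (\<lambda>\<omega>. vec2 (X \<omega>) $ i)" for i
  define c where "c i = (\<lambda>\<omega>. vec2 (X \<omega>) $ i - m i)" for i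
  have measurable_component: "(\<lambda>\<omega>. vec2 (X \<omega>) $ i) \<in> borel_measurable M" for i
    using measurable_comp_count_space[OF X, of "\<lambda>p. vec2 p $ i"] by simp
  have measurable_c: "c i \<in> borel_measurable M" for i
    using measurable_comp_count_space[OF X, of "\<lambda>p. vec2 p $ i - m i"] by (simp add: c_def)
  have component_square: "integrable M (\<lambda>\<omega>. (vec2 (X \<omega>) $ i)\<^sup>2)" for i
    by (rule integrable_square_vec2_component[OF X square_integrable])
  have component: "integrable M (\<lambda>\<omega>. vec2 (X \<omega>) $ i)" for i
    by (rule square_integrable_imp_integrable[OF measurable_component component_square])
  have c_square: "integrable M (\<lambda>\<omega>. (c i \<omega>)\<^sup>2)" for i
    unfolding c_def using integrable_square_diff_const[OF component_square component] .
  have c_mult: "integrable M (\<lambda>\<omega>. c i \<omega> * c j \<omega>)" for i j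
    by (rule integrable_mult_of_square_integrable[OF measurable_c measurable_c c_square c_square])
  have "u \<bullet> vec2 (X \<omega>) - expectation (\<lambda>\<omega>. u \<bullet> vec2 (X \<omega>)) = (\<Sum>i\<in>UNIV. u $ i * c i \<omega>)" for \<omega>
  proof -
    have "expectation (\<lambda>\<omega>. u \<bullet> vec2 (X \<omega>)) = (\<Sum>i\<in>UNIV. u $ i * m i)"
      using component by (simp add: inner_vec_def m_def Bochner_Integration.integral_sum)
    then show ?thesis by (simp add: inner_vec_def c_def sum_subtractf right_diff_distrib)
  qed
  then have "variance (\<lambda>\<omega>. u \<bullet> vec2 (X \<omega>))
      = expectation (\<lambda>\<omega>. \<Sum>i\<in>UNIV. \<Sum>j\<in>UNIV. u $ i * u $ j * (c i \<omega> * c j \<omega>))"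
    by (simp add: power2_eq_square sum_product mult_ac)
  also have "\<dots> = (\<Sum>i\<in>UNIV. \<Sum>j\<in>UNIV. u $ i * u $ j * expectation (\<lambda>\<omega>. c i \<omega> * c j \<omega>))"
    using c_mult by (simp add: Bochner_Integration.integral_sum)
  also have "\<dots> = (cov_matrix M (\<lambda>\<omega>. vec2 (X \<omega>)) *v u) \<bullet> u"
    by (simp add: cov_matrix_def c_def m_def inner_vec_def matrix_vector_mult_def
        sum_distrib_left sum_distrib_right mult_ac)
  finally show ?thesis by simp
qed

lemma (in prob_space) AE_eq_0_of_int_valued_variance_0:
  fixes D :: "'a \<Rightarrow> real"
  assumes [measurable]: "D \<in> borel_measurable M" and int_valued: "\<And>\<omega>. D \<omega> \<in> \<int>"
    and square_integrable: "integrable M (\<lambda>\<omega>. (D \<omega>)\<^sup>2)"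
    and variance: "variance D = 0" and mean: "\<bar>expectation D\<bar> < 1"
  shows "AE \<omega> in M. D \<omega> = 0"
proof -
  have "integrable M D"
    by (rule square_integrable_imp_integrable[OF _ square_integrable]) measurable
  then have "integrable M (\<lambda>\<omega>. (D \<omega> - expectation D)\<^sup>2)"
    by (rule integrable_square_diff_const[OF square_integrable])
  then have "AE \<omega> in M. (D \<omega> - expectation D)\<^sup>2 = 0"
    using variance by (subst integral_nonneg_eq_0_iff_AE[symmetric]) auto
  then have ae: "AE \<omega> in M. D \<omega> = expectation D"
    by (rule AE_mp) (intro AE_I2 impI, simp)
  obtain \<omega> where \<omega>: "D \<omega> = expectation D"
    using eventually_happens[OF ae] ae_filter_bot by blast
  obtain k :: int where k: "D \<omega> = of_int k"
    using int_valued[of \<omega>] by (elim Ints_cases)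
  have "\<bar>of_int k\<bar> < (1::real)" using \<omega> k mean by simp
  then have "k = 0" by linarith
  then have "expectation D = 0" using \<omega> k by simp
  then show ?thesis using ae by simp
qed

lemma square_inner_utilde_vec2_le: "(utilde \<bullet> vec2 p)\<^sup>2 \<le> 2 * (norm (vec2 p))\<^sup>2"
proof -
  have "(real (fst p) - real (snd p))\<^sup>2 \<le> 2 * ((real (fst p))\<^sup>2 + (real (snd p))\<^sup>2)"
    using zero_le_square[of "real (fst p) + real (snd p)"] by (simp add: power2_eq_square algebra_simps)
  then show ?thesis by (simp only: inner_utilde_vec2 norm_vec2_square)
qed

lemma (in prob_space) integrable_square_inner_utilde_vec2:
  fixes X :: "'a \<Rightarrow> nat \<times> nat"
  assumes "X \<in> measurable M (count_space UNIV)"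
    and "integrable M (\<lambda>\<omega>. (norm (vec2 (X \<omega>)))\<^sup>2)"
  shows "integrable M (\<lambda>\<omega>. (utilde \<bullet> vec2 (X \<omega>))\<^sup>2)"
proof (rule Bochner_Integration.integrable_bound)
  show "integrable M (\<lambda>\<omega>. 2 * (norm (vec2 (X \<omega>)))\<^sup>2)" using assms(2) by simp
  show "AE \<omega> in M. norm ((utilde \<bullet> vec2 (X \<omega>))\<^sup>2) \<le> norm (2 * (norm (vec2 (X \<omega>)))\<^sup>2)"
    using square_inner_utilde_vec2_le by simp
  show "(\<lambda>\<omega>. (utilde \<bullet> vec2 (X \<omega>))\<^sup>2) \<in> borel_measurable M"
    using measurable_comp_count_space[OF assms(1), of "\<lambda>p. (utilde \<bullet> vec2 p)\<^sup>2"] by simp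
qed

lemma (in prob_space) AE_fst_eq_snd_of_cov_quadratic_form_0:
  fixes X :: "'a \<Rightarrow> nat \<times> nat"
  assumes [measurable]: "X \<in> measurable M (count_space UNIV)"
    and square_integrable: "integrable M (\<lambda>\<omega>. (norm (vec2 (X \<omega>)))\<^sup>2)"
    and mean: "\<bar>utilde \<bullet> expectation (\<lambda>\<omega>. vec2 (X \<omega>))\<bar> < 1"
    and cov: "(cov_matrix M (\<lambda>\<omega>. vec2 (X \<omega>)) *v utilde) \<bullet> utilde = 0"
  shows "AE \<omega> in M. fst (X \<omega>) = snd (X \<omega>)"
proof -
  have [measurable]: "(\<lambda>\<omega>. vec2 (X \<omega>)) \<in> borel_measurable M"
    by (rule measurable_comp_count_space) fact
  define D where "D = (\<lambda>\<omega>. utilde \<bullet> vec2 (X \<omega>))"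
  have [measurable]: "D \<in> borel_measurable M" unfolding D_def by measurable
  have "integrable M (\<lambda>\<omega>. norm (vec2 (X \<omega>)))"
    by (rule square_integrable_imp_integrable[OF _ square_integrable]) measurable
  then have "expectation D = utilde \<bullet> expectation (\<lambda>\<omega>. vec2 (X \<omega>))"
    unfolding D_def by (intro integral_inner_right) (simp add: integrable_norm_iff)
  moreover have "integrable M (\<lambda>\<omega>. (D \<omega>)\<^sup>2)"
    unfolding D_def using assms(1) square_integrable by (rule integrable_square_inner_utilde_vec2)
  moreover have "variance D = 0"
    using cov cov_matrix_vec2_quadratic_form[OF assms(1) square_integrable, of utilde]
    by (simp add: D_def)
  moreover have "D \<omega> \<in> \<int>" for \<omega> by (simp add: D_def inner_utilde_vec2)
  ultimately have "AE \<omega> in M. D \<omega> = 0"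
    using mean by (intro AE_eq_0_of_int_valued_variance_0) auto
  then show ?thesis by (simp add: D_def inner_utilde_vec2)
qed

lemma (in prob_space) expectation_square_inner_utilde_eq_0_iff:
  fixes X :: "'a \<Rightarrow> nat \<times> nat"
  assumes "X \<in> measurable M (count_space UNIV)"
    and "integrable M (\<lambda>\<omega>. (norm (vec2 (X \<omega>)))\<^sup>2)"
  shows "expectation (\<lambda>\<omega>. (utilde \<bullet> vec2 (X \<omega>))\<^sup>2) = 0 \<longleftrightarrow> (AE \<omega> in M. fst (X \<omega>) = snd (X \<omega>))"
  using integrable_square_inner_utilde_vec2[OF assms]
  by (simp add: integral_nonneg_eq_0_iff_AE inner_utilde_vec2)

lemma inner_utilde_gwi_Suc:
  assumes "\<And>j. j \<ge> 1 \<Longrightarrow> fst (\<xi>1 (Suc k) j \<omega>) = snd (\<xi>1 (Suc k) j \<omega>)"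
    and "\<And>j. j \<ge> 1 \<Longrightarrow> fst (\<xi>2 (Suc k) j \<omega>) = snd (\<xi>2 (Suc k) j \<omega>)"
  shows "utilde \<bullet> vec2 (gwi \<xi>1 \<xi>2 \<epsilon> (Suc k) \<omega>) = utilde \<bullet> vec2 (\<epsilon> (Suc k) \<omega>)"
proof -
  obtain m n where mn: "gwi \<xi>1 \<xi>2 \<epsilon> k \<omega> = (m, n)" by fastforce
  have "(\<Sum>j\<in>{1..m}. fst (\<xi>1 (Suc k) j \<omega>)) = (\<Sum>j\<in>{1..m}. snd (\<xi>1 (Suc k) j \<omega>))"
    "(\<Sum>j\<in>{1..n}. fst (\<xi>2 (Suc k) j \<omega>)) = (\<Sum>j\<in>{1..n}. snd (\<xi>2 (Suc k) j \<omega>))"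
    using assms by (auto intro: sum.cong)
  then show ?thesis by (simp add: mn Let_def inner_utilde_vec2)
qed

locale gwi_process = prob_space +
  fixes \<xi>1 \<xi>2 :: "nat \<Rightarrow> nat \<Rightarrow> 'a \<Rightarrow> nat \<times> nat" and \<epsilon> :: "nat \<Rightarrow> 'a \<Rightarrow> nat \<times> nat"
  assumes indep: "indep_vars (\<lambda>_. count_space UNIV) (gwi_family \<xi>1 \<xi>2 \<epsilon>) gwi_index"
    and offspring1_distr: "\<And>k j. k \<ge> 1 \<Longrightarrow> j \<ge> 1 \<Longrightarrow>
           distr M (count_space UNIV) (\<xi>1 k j) = distr M (count_space UNIV) (\<xi>1 1 1)"
    and offspring2_distr: "\<And>k j. k \<ge> 1 \<Longrightarrow> j \<ge> 1 \<Longrightarrow>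
           distr M (count_space UNIV) (\<xi>2 k j) = distr M (count_space UNIV) (\<xi>2 1 1)"
    and immigration_distr: "\<And>k. k \<ge> 1 \<Longrightarrow>
           distr M (count_space UNIV) (\<epsilon> k) = distr M (count_space UNIV) (\<epsilon> 1)"
begin

lemma measurable_gwi_family: "x \<in> gwi_index \<Longrightarrow> gwi_family \<xi>1 \<xi>2 \<epsilon> x \<in> measurable M (count_space UNIV)"
  using indep by (auto simp: indep_vars_def)

lemma measurable_offspring1: "k \<ge> 1 \<Longrightarrow> j \<ge> 1 \<Longrightarrow> \<xi>1 k j \<in> measurable M (count_space UNIV)"
  using measurable_gwi_family[of "Inl (k, j, 1)"] by (simp add: gwi_index_def gwi_family_def)

lemma measurable_offspring2: "k \<ge> 1 \<Longrightarrow> j \<ge> 1 \<Longrightarrow> \<xi>2 k j \<in> measurable M (count_space UNIV)"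
  using measurable_gwi_family[of "Inl (k, j, 2)"] by (simp add: gwi_index_def gwi_family_def)

lemma measurable_immigration: "k \<ge> 1 \<Longrightarrow> \<epsilon> k \<in> measurable M (count_space UNIV)"
  using measurable_gwi_family[of "Inr k"] by (simp add: gwi_index_def gwi_family_def)

lemma AE_inner_utilde_gwi_eq_immigration:
  assumes "AE \<omega> in M. fst (\<xi>1 1 1 \<omega>) = snd (\<xi>1 1 1 \<omega>)"
    and "AE \<omega> in M. fst (\<xi>2 1 1 \<omega>) = snd (\<xi>2 1 1 \<omega>)"
  shows "AE \<omega> in M. \<forall>k. utilde \<bullet> vec2 (gwi \<xi>1 \<xi>2 \<epsilon> (Suc k) \<omega>) = utilde \<bullet> vec2 (\<epsilon> (Suc k) \<omega>)"
proof -
  have "AE \<omega> in M. \<forall>k j. j \<ge> 1 \<longrightarrow> fst (\<xi>1 (Suc k) j \<omega>) = snd (\<xi>1 (Suc k) j \<omega>)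
                                  \<and> fst (\<xi>2 (Suc k) j \<omega>) = snd (\<xi>2 (Suc k) j \<omega>)"
  proof (simp only: AE_all_countable, intro allI)
    fix k j :: nat
    show "AE \<omega> in M. j \<ge> 1 \<longrightarrow> fst (\<xi>1 (Suc k) j \<omega>) = snd (\<xi>1 (Suc k) j \<omega>)
                                  \<and> fst (\<xi>2 (Suc k) j \<omega>) = snd (\<xi>2 (Suc k) j \<omega>)"
    proof (cases "j \<ge> 1")
      case True
      have "AE \<omega> in M. fst (\<xi>1 (Suc k) j \<omega>) = snd (\<xi>1 (Suc k) j \<omega>)"
        using AE_eq_of_distr_eq[where P = "\<lambda>x. fst x = snd x", OF offspring1_distr[of "Suc k" j]
            measurable_offspring1[of "Suc k" j] measurable_offspring1[of 1 1] assms(1)] True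
        by simp
      moreover have "AE \<omega> in M. fst (\<xi>2 (Suc k) j \<omega>) = snd (\<xi>2 (Suc k) j \<omega>)"
        using AE_eq_of_distr_eq[where P = "\<lambda>x. fst x = snd x", OF offspring2_distr[of "Suc k" j]
            measurable_offspring2[of "Suc k" j] measurable_offspring2[of 1 1] assms(2)] True
        by simp
      ultimately show ?thesis by eventually_elim simp
    qed simp
  qed
  then show ?thesis
  proof eventually_elim
    case (elim \<omega>)
    show ?case by (intro allI inner_utilde_gwi_Suc) (use elim in auto)
  qed
qed

lemma AE_inner_utilde_gwi_eq_immigration_of_critical:
  assumes square_integrable1: "integrable M (\<lambda>\<omega>. (norm (vec2 (\<xi>1 1 1 \<omega>)))\<^sup>2)"
    and square_integrable2: "integrable M (\<lambda>\<omega>. (norm (vec2 (\<xi>2 1 1 \<omega>)))\<^sup>2)"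
    and mean1: "\<bar>utilde \<bullet> expectation (\<lambda>\<omega>. vec2 (\<xi>1 1 1 \<omega>))\<bar> < 1"
    and mean2: "\<bar>utilde \<bullet> expectation (\<lambda>\<omega>. vec2 (\<xi>2 1 1 \<omega>))\<bar> < 1"
    and critical: "((1/2) *\<^sub>R (cov_matrix M (\<lambda>\<omega>. vec2 (\<xi>1 1 1 \<omega>)) + cov_matrix M (\<lambda>\<omega>. vec2 (\<xi>2 1 1 \<omega>)))
                  *v utilde) \<bullet> utilde = 0"
  shows "AE \<omega> in M. \<forall>k. utilde \<bullet> vec2 (gwi \<xi>1 \<xi>2 \<epsilon> (Suc k) \<omega>) = utilde \<bullet> vec2 (\<epsilon> (Suc k) \<omega>)"
proof -
  define q where "q X = (cov_matrix M (\<lambda>\<omega>. vec2 (X \<omega>)) *v utilde) \<bullet> utilde" for X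
  have "q (\<xi>1 1 1) = variance (\<lambda>\<omega>. utilde \<bullet> vec2 (\<xi>1 1 1 \<omega>))"
    "q (\<xi>2 1 1) = variance (\<lambda>\<omega>. utilde \<bullet> vec2 (\<xi>2 1 1 \<omega>))"
    unfolding q_def
    by (intro cov_matrix_vec2_quadratic_form measurable_offspring1 measurable_offspring2
        square_integrable1 square_integrable2; simp)+
  moreover have "q (\<xi>1 1 1) + q (\<xi>2 1 1) = 0"
    using critical by (simp add: q_def matrix_vector_mult_add_rdistrib inner_add_left
        flip: scaleR_matrix_vector_assoc)
  moreover have "0 \<le> variance (\<lambda>\<omega>. utilde \<bullet> vec2 (X \<omega>))" for X :: "'a \<Rightarrow> nat \<times> nat"
    by (rule variance_positive)
  ultimately have "q (\<xi>1 1 1) = 0" "q (\<xi>2 1 1) = 0"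
    by (metis add_nonneg_eq_0_iff)+
  then show ?thesis
    using square_integrable1 square_integrable2 mean1 mean2
    by (intro AE_inner_utilde_gwi_eq_immigration AE_fst_eq_snd_of_cov_quadratic_form_0
        measurable_offspring1 measurable_offspring2; simp add: q_def)+
qed

lemma AE_average_immigration_square_tendsto:
  assumes "integrable M (\<lambda>\<omega>. norm (vec2 (\<epsilon> 1 \<omega>)) ^ 8)"
  shows "AE \<omega> in M. (\<lambda>n. (\<Sum>k<n. (utilde \<bullet> vec2 (\<epsilon> (Suc k) \<omega>))\<^sup>2) / real n)
           \<longlonglongrightarrow> expectation (\<lambda>\<omega>. (utilde \<bullet> vec2 (\<epsilon> 1 \<omega>))\<^sup>2)"
proof -
  define h :: "nat \<times> nat \<Rightarrow> real" where "h p = (utilde \<bullet> vec2 p)\<^sup>2" for p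
  have [measurable]: "(\<lambda>\<omega>. vec2 (\<epsilon> (Suc 0) \<omega>)) \<in> borel_measurable M"
    using measurable_immigration[of "Suc 0"] by (rule measurable_comp_count_space) simp
  interpret iid_fourth_moment M "\<lambda>k \<omega>. h (\<epsilon> (Suc k) \<omega>)"
  proof
    have indep_immigration:
      "indep_vars (\<lambda>_. count_space UNIV) (\<lambda>k. gwi_family \<xi>1 \<xi>2 \<epsilon> (Inr (Suc k))) UNIV"
      using indep_vars_reindex[OF indep, of "\<lambda>k. Inr (Suc k)" UNIV]
      by (auto simp: gwi_index_def inj_on_def)
    show "indep_vars (\<lambda>_. borel) (\<lambda>k \<omega>. h (\<epsilon> (Suc k) \<omega>)) UNIV"
      using indep_vars_compose2[OF indep_immigration, of "\<lambda>_. h" "\<lambda>_. borel"]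
      by (simp add: gwi_family_def)
    show "distr M borel (\<lambda>\<omega>. h (\<epsilon> (Suc k) \<omega>)) = distr M borel (\<lambda>\<omega>. h (\<epsilon> (Suc 0) \<omega>))" for k
      using distr_comp_eq_of_distr_eq[where g = h and K = borel, OF immigration_distr[of "Suc k"]
          measurable_immigration[of "Suc k"] measurable_immigration[of 1]]
      by simp
    show "integrable M (\<lambda>\<omega>. h (\<epsilon> (Suc 0) \<omega>) ^ 4)"
    proof (rule Bochner_Integration.integrable_bound)
      show "integrable M (\<lambda>\<omega>. 16 * norm (vec2 (\<epsilon> 1 \<omega>)) ^ 8)" using assms by simp
      have "h p ^ 4 \<le> (2 * (norm (vec2 p))\<^sup>2) ^ 4" for p
        unfolding h_def by (intro power_mono square_inner_utilde_vec2_le) simp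
      then show "AE \<omega> in M. norm (h (\<epsilon> (Suc 0) \<omega>) ^ 4) \<le> norm (16 * norm (vec2 (\<epsilon> 1 \<omega>)) ^ 8)"
        by (simp add: h_def power_mult_distrib power_mult[symmetric])
    qed (simp add: h_def)
  qed
  show ?thesis using AE_average_tendsto_expectation by (simp add: h_def)
qed

lemma AE_average_square_difference_tendsto:
  assumes offspring: "AE \<omega> in M. \<forall>k. utilde \<bullet> vec2 (gwi \<xi>1 \<xi>2 \<epsilon> (Suc k) \<omega>) = utilde \<bullet> vec2 (\<epsilon> (Suc k) \<omega>)"
    and "integrable M (\<lambda>\<omega>. norm (vec2 (\<epsilon> 1 \<omega>)) ^ 8)"
  shows "AE \<omega> in M. (\<lambda>n. (\<Sum>k\<in>{1..n}. (real (fst (gwi \<xi>1 \<xi>2 \<epsilon> k \<omega>))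
                                         - real (snd (gwi \<xi>1 \<xi>2 \<epsilon> k \<omega>))) ^ 2) / real n)
           \<longlonglongrightarrow> expectation (\<lambda>\<omega>. (utilde \<bullet> vec2 (\<epsilon> 1 \<omega>))\<^sup>2)"
  using offspring AE_average_immigration_square_tendsto[OF assms(2)]
proof eventually_elim
  case (elim \<omega>)
  then show ?case by (simp add: sum.atLeast1_atMost_eq inner_utilde_vec2)
qed

lemma AE_gwi_fst_eq_snd_iff_immigration:
  assumes offspring: "AE \<omega> in M. \<forall>k. utilde \<bullet> vec2 (gwi \<xi>1 \<xi>2 \<epsilon> (Suc k) \<omega>) = utilde \<bullet> vec2 (\<epsilon> (Suc k) \<omega>)"
  shows "(\<forall>k\<ge>1. AE \<omega> in M. fst (gwi \<xi>1 \<xi>2 \<epsilon> k \<omega>) = snd (gwi \<xi>1 \<xi>2 \<epsilon> k \<omega>))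
     \<longleftrightarrow> (AE \<omega> in M. fst (\<epsilon> 1 \<omega>) = snd (\<epsilon> 1 \<omega>))"
proof
  assume "\<forall>k\<ge>1. AE \<omega> in M. fst (gwi \<xi>1 \<xi>2 \<epsilon> k \<omega>) = snd (gwi \<xi>1 \<xi>2 \<epsilon> k \<omega>)"
  then show "AE \<omega> in M. fst (\<epsilon> 1 \<omega>) = snd (\<epsilon> 1 \<omega>)" by (auto dest: spec[of _ 1])
next
  assume immigration: "AE \<omega> in M. fst (\<epsilon> 1 \<omega>) = snd (\<epsilon> 1 \<omega>)"
  show "\<forall>k\<ge>1. AE \<omega> in M. fst (gwi \<xi>1 \<xi>2 \<epsilon> k \<omega>) = snd (gwi \<xi>1 \<xi>2 \<epsilon> k \<omega>)"
  proof (intro allI impI)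
    fix k :: nat assume "k \<ge> 1"
    then obtain k' where k: "k = Suc k'" using not0_implies_Suc by fastforce
    have "AE \<omega> in M. fst (\<epsilon> k \<omega>) = snd (\<epsilon> k \<omega>)"
      using AE_eq_of_distr_eq[where P = "\<lambda>x. fst x = snd x", OF immigration_distr[of k]
          measurable_immigration[of k] measurable_immigration[of 1] immigration] \<open>k \<ge> 1\<close>
      by simp
    with offspring show "AE \<omega> in M. fst (gwi \<xi>1 \<xi>2 \<epsilon> k \<omega>) = snd (gwi \<xi>1 \<xi>2 \<epsilon> k \<omega>)"
      by eventually_elim (auto simp: k inner_utilde_vec2 dest: spec[of _ k'])
  qed
qed

end

theorem lemmaA3:
  fixes M :: "'a measure"
    and \<xi>1 \<xi>2 :: "nat \<Rightarrow> nat \<Rightarrow> 'a \<Rightarrow> nat \<times> nat"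
    and \<epsilon> :: "nat \<Rightarrow> 'a \<Rightarrow> nat \<times> nat"
    and \<alpha> \<beta> :: real
  assumes P: "prob_space M"
    and indep: "prob_space.indep_vars M (\<lambda>_. count_space UNIV) (gwi_family \<xi>1 \<xi>2 \<epsilon>) gwi_index"
    and id1: "\<And>k j. k \<ge> 1 \<Longrightarrow> j \<ge> 1 \<Longrightarrow>
                distr M (count_space UNIV) (\<xi>1 k j) = distr M (count_space UNIV) (\<xi>1 1 1)"
    and id2: "\<And>k j. k \<ge> 1 \<Longrightarrow> j \<ge> 1 \<Longrightarrow>
                distr M (count_space UNIV) (\<xi>2 k j) = distr M (count_space UNIV) (\<xi>2 1 1)"
    and id3: "\<And>k. k \<ge> 1 \<Longrightarrow>
                distr M (count_space UNIV) (\<epsilon> k) = distr M (count_space UNIV) (\<epsilon> 1)"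
    and ab: "0 < \<alpha>" "\<alpha> < 1" "0 < \<beta>" "\<beta> < 1" "\<alpha> + \<beta> = 1"
    and mean1: "integral\<^sup>L M (\<lambda>\<omega>. vec2 (\<xi>1 1 1 \<omega>)) = vector [\<alpha>, \<beta>]"
    and mean2: "integral\<^sup>L M (\<lambda>\<omega>. vec2 (\<xi>2 1 1 \<omega>)) = vector [\<beta>, \<alpha>]"
    and mom1: "integrable M (\<lambda>\<omega>. norm (vec2 (\<xi>1 1 1 \<omega>)) ^ 8)"
    and mom2: "integrable M (\<lambda>\<omega>. norm (vec2 (\<xi>2 1 1 \<omega>)) ^ 8)"
    and mom3: "integrable M (\<lambda>\<omega>. norm (vec2 (\<epsilon> 1 \<omega>)) ^ 8)"
    and imm: "integral\<^sup>L M (\<lambda>\<omega>. vec2 (\<epsilon> 1 \<omega>)) \<noteq> 0"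
    and crit: "((1/2) *\<^sub>R (cov_matrix M (\<lambda>\<omega>. vec2 (\<xi>1 1 1 \<omega>)) + cov_matrix M (\<lambda>\<omega>. vec2 (\<xi>2 1 1 \<omega>)))
                  *v utilde) \<bullet> utilde = 0"
  shows "(AE \<omega> in M. (\<lambda>n. (\<Sum>k\<in>{1..n}. (real (fst (gwi \<xi>1 \<xi>2 \<epsilon> k \<omega>))
                                         - real (snd (gwi \<xi>1 \<xi>2 \<epsilon> k \<omega>))) ^ 2) / real n)
            \<longlonglongrightarrow> integral\<^sup>L M (\<lambda>\<omega>. (utilde \<bullet> vec2 (\<epsilon> 1 \<omega>)) ^ 2))
         \<and> (integral\<^sup>L M (\<lambda>\<omega>. (utilde \<bullet> vec2 (\<epsilon> 1 \<omega>)) ^ 2) = 0 \<longleftrightarrow>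
         (\<forall>k\<ge>1. AE \<omega> in M. fst (gwi \<xi>1 \<xi>2 \<epsilon> k \<omega>) = snd (gwi \<xi>1 \<xi>2 \<epsilon> k \<omega>)))"
proof -
  interpret gwi_process M \<xi>1 \<xi>2 \<epsilon>
    using P indep id1 id2 id3 unfolding gwi_process_def gwi_process_axioms_def by blast
  have square_integrable: "integrable M (\<lambda>\<omega>. (norm (vec2 (X \<omega>)))\<^sup>2)"
    if "X \<in> measurable M (count_space UNIV)" "integrable M (\<lambda>\<omega>. norm (vec2 (X \<omega>)) ^ 8)" for X
    by (rule integrable_power_le_even[OF measurable_comp_count_space[OF that(1)] that(2)]) auto
  note square_integrable1 = square_integrable[OF measurable_offspring1[of 1 1] mom1]
    and square_integrable2 = square_integrable[OF measurable_offspring2[of 1 1] mom2]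
    and square_integrable3 = square_integrable[OF measurable_immigration[of 1] mom3]
  have "\<bar>\<alpha> - \<beta>\<bar> < 1" using ab by linarith
  then have offspring: "AE \<omega> in M. \<forall>k. utilde \<bullet> vec2 (gwi \<xi>1 \<xi>2 \<epsilon> (Suc k) \<omega>)
                                   = utilde \<bullet> vec2 (\<epsilon> (Suc k) \<omega>)"
    using square_integrable1 square_integrable2 mean1 mean2 crit
    by (intro AE_inner_utilde_gwi_eq_immigration_of_critical)
      (simp_all add: utilde_def inner_vec_def sum_2 abs_minus_commute)
  show ?thesis
    using AE_average_square_difference_tendsto[OF offspring mom3]
      AE_gwi_fst_eq_snd_iff_immigration[OF offspring]
      expectation_square_inner_utilde_eq_0_iff[OF measurable_immigration[of 1] square_integrable3]
    by simp
qed

end
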